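(* Let $\Omega\subset\mathbb{R}^n$ be a bounded convex domain with smooth boundary and let $u$ be a given external potential on $\Omega$. Let $U_1$ and $U_2$ be two solutions of $$-\Delta U(x)=\frac{e^{-(U(x)+u(x))}}{\int_\Omega e^{-(U(y)+u(y))}\,dy}\quad\text{in }\Omega,\qquad U=0\ \text{on }\partial\Omega,$$ and set $I_i:=\int_\Omega \exp(-u-U_i)\,dx$ for $i=1,2$. If $I_1\ge I_2$, then $U_1(x)\le U_2(x)$ for all $x\in\Omega$. In particular, if $I_1=I_2$, then $U_1(x)=U_2(x)$ for all $x\in\Omega$. *)

theory Defs
  imports "HOL-Analysis.Analysis"
begin

fun dderiv :: "'a::euclidean_space list \<Rightarrow> ('a \<Rightarrow> real) \<Rightarrow> 'a \<Rightarrow> real" where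
  "dderiv [] f = f"
| "dderiv (v # vs) f = (\<lambda>x. frechet_derivative (dderiv vs f) (at x) v)"

definition smooth_on :: "'a::euclidean_space set \<Rightarrow> ('a \<Rightarrow> real) \<Rightarrow> bool" where
  "smooth_on S f \<longleftrightarrow>
     (\<forall>vs. set vs \<subseteq> Basis \<longrightarrow>
        (\<forall>x\<in>S. dderiv vs f differentiable (at x)) \<and> continuous_on S (dderiv vs f))"

definition smooth_boundary :: "'a::euclidean_space set \<Rightarrow> bool" where
  "smooth_boundary \<Omega> \<longleftrightarrow>
     (\<forall>p\<in>frontier \<Omega>. \<exists>N \<psi>. open N \<and> p \<in> N \<and> smooth_on N \<psi> \<and>
        (\<forall>x\<in>N. frechet_derivative \<psi> (at x) \<noteq> (\<lambda>_. 0)) \<and>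
        \<Omega> \<inter> N = {x\<in>N. \<psi> x < 0})"

definition C2_on :: "'a::euclidean_space set \<Rightarrow> ('a \<Rightarrow> real) \<Rightarrow> bool" where
  "C2_on S f \<longleftrightarrow>
     (\<forall>x\<in>S. f differentiable (at x)) \<and>
     (\<forall>i\<in>Basis. (\<forall>x\<in>S. dderiv [i] f differentiable (at x)) \<and>
        (\<forall>j\<in>Basis. continuous_on S (dderiv [j, i] f)))"

definition laplacian :: "('a::euclidean_space \<Rightarrow> real) \<Rightarrow> 'a \<Rightarrow> real" where
  "laplacian f x = (\<Sum>i\<in>Basis. dderiv [i, i] f x)"

definition is_solution :: "'a::euclidean_space set \<Rightarrow> ('a \<Rightarrow> real) \<Rightarrow> ('a \<Rightarrow> real) \<Rightarrow> bool" where
  "is_solution \<Omega> u U \<longleftrightarrow>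
     C2_on \<Omega> U \<and> continuous_on (closure \<Omega>) U \<and>
     (\<forall>x\<in>\<Omega>. - laplacian U x =
        exp (- (U x + u x)) / integral \<Omega> (\<lambda>y. exp (- (U y + u y)))) \<and>
     (\<forall>x\<in>frontier \<Omega>. U x = 0)"

end

theory Submission
  imports Defs
begin

text \<open>If \<open>U\<^sub>1 - U\<^sub>2\<close> had a positive maximum over the closure, it would be attained at an
  interior point \<open>x\<^sub>0\<close>, since both functions vanish on the boundary. There every pure second
  partial derivative of \<open>U\<^sub>1 - U\<^sub>2\<close> is non-positive, so \<open>\<Delta>U\<^sub>1(x\<^sub>0) \<le> \<Delta>U\<^sub>2(x\<^sub>0)\<close>. But
  \<open>-\<Delta>U\<^sub>i(x\<^sub>0) = exp(-u(x\<^sub>0) - U\<^sub>i(x\<^sub>0)) / I\<^sub>i\<close>, and \<open>U\<^sub>1(x\<^sub>0) > U\<^sub>2(x\<^sub>0)\<close> together with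
  \<open>I\<^sub>1 \<ge> I\<^sub>2 > 0\<close> makes this strictly smaller for \<open>i = 1\<close>.\<close>

lemma second_deriv_nonpos_at_local_max:
  fixes g g' :: "real \<Rightarrow> real"
  assumes "0 < r"
    and deriv: "\<And>t. \<bar>t - a\<bar> < r \<Longrightarrow> (g has_real_derivative g' t) (at t)"
    and deriv2: "(g' has_real_derivative c) (at a)"
    and max: "\<And>t. \<bar>t - a\<bar> < r \<Longrightarrow> g t \<le> g a"
  shows "c \<le> 0"
proof (rule ccontr)
  assume "\<not> c \<le> 0"
  have "g' a = 0"
    by (rule DERIV_local_max[OF deriv[of a] \<open>0 < r\<close>]) (use max \<open>0 < r\<close> in \<open>auto simp: dist_real_def\<close>)
  obtain e where "0 < e" and g'_inc: "\<And>h. 0 < h \<Longrightarrow> h < e \<Longrightarrow> g' a < g' (a + h)"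
    using DERIV_pos_inc_right[OF deriv2] \<open>\<not> c \<le> 0\<close> by force
  define t where "t = a + min e r / 2"
  have t: "a < t" "t - a < e" "t - a < r"
    using \<open>0 < e\<close> \<open>0 < r\<close> by (auto simp: t_def)
  obtain z where z: "a < z" "z < t" "g t - g a = (t - a) * g' z"
    using MVT2[of a t g g'] t deriv by force
  have "0 < g' z"
    using g'_inc[of "z - a"] z t \<open>g' a = 0\<close> by simp
  then have "g a < g t"
    using z t mult_pos_pos[of "t - a" "g' z"] by linarith
  moreover have "g t \<le> g a"
    using max t by simp
  ultimately show False
    by simp
qed

lemma has_real_derivative_along_line:
  fixes f :: "'a::euclidean_space \<Rightarrow> real"
  assumes "f differentiable (at (x + t *\<^sub>R v))"
  shows "((\<lambda>s. f (x + s *\<^sub>R v)) has_real_derivative frechet_derivative f (at (x + t *\<^sub>R v)) v) (at t)"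
proof -
  let ?F = "frechet_derivative f (at (x + t *\<^sub>R v))"
  have F: "(f has_derivative ?F) (at (x + t *\<^sub>R v))"
    using assms frechet_derivative_works by blast
  have line: "((\<lambda>s. x + s *\<^sub>R v) has_derivative (\<lambda>s. s *\<^sub>R v)) (at t)"
    by (auto intro!: derivative_eq_intros)
  have "((\<lambda>s. f (x + s *\<^sub>R v)) has_derivative (\<lambda>s. ?F (s *\<^sub>R v))) (at t)"
    using has_derivative_compose[OF line F] by (simp add: o_def)
  moreover have "(\<lambda>s. ?F (s *\<^sub>R v)) = (*) (?F v)"
    using linear_scale[OF has_derivative_linear[OF F]] by (auto simp: fun_eq_iff)
  ultimately show ?thesis
    by (simp add: has_field_derivative_def)
qed

lemma second_partial_le_at_max_of_diff:
  fixes f g :: "'a::euclidean_space \<Rightarrow> real"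
  assumes "open S" "x \<in> S" "i \<in> Basis"
    and f: "C2_on S f" and g: "C2_on S g"
    and max: "\<And>y. y \<in> S \<Longrightarrow> f y - g y \<le> f x - g x"
  shows "dderiv [i, i] f x \<le> dderiv [i, i] g x"
proof -
  obtain r where "0 < r" "ball x r \<subseteq> S"
    using \<open>open S\<close> \<open>x \<in> S\<close> open_contains_ball by blast
  have on_line: "x + t *\<^sub>R i \<in> S" if "\<bar>t\<bar> < r" for t
    using that \<open>i \<in> Basis\<close> \<open>ball x r \<subseteq> S\<close> by (auto simp: dist_norm)
  let ?h = "\<lambda>F t. F (x + t *\<^sub>R i)"
  have "dderiv [i, i] f x - dderiv [i, i] g x \<le> 0"
  proof (rule second_deriv_nonpos_at_local_max[OF \<open>0 < r\<close>])
    show "(?h (\<lambda>y. f y - g y) has_real_derivative ?h (\<lambda>y. dderiv [i] f y - dderiv [i] g y) t) (at t)"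
      if "\<bar>t - 0\<bar> < r" for t
      using on_line[of t] that f g
      by (auto simp: C2_on_def intro!: DERIV_diff has_real_derivative_along_line)
    have diff: "dderiv [i] f differentiable (at (x + 0 *\<^sub>R i))"
      "dderiv [i] g differentiable (at (x + 0 *\<^sub>R i))"
      using f g \<open>x \<in> S\<close> \<open>i \<in> Basis\<close> by (auto simp: C2_on_def)
    show "(?h (\<lambda>y. dderiv [i] f y - dderiv [i] g y) has_real_derivative
        dderiv [i, i] f x - dderiv [i, i] g x) (at 0)"
      using DERIV_diff[OF diff[THEN has_real_derivative_along_line]] by simp
    show "?h (\<lambda>y. f y - g y) t \<le> ?h (\<lambda>y. f y - g y) 0" if "\<bar>t - 0\<bar> < r" for t
      using max on_line that by simp
  qed
  then show ?thesis
    by simp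
qed

lemma laplacian_le_at_max_of_diff:
  fixes f g :: "'a::euclidean_space \<Rightarrow> real"
  assumes "open S" "x \<in> S" "C2_on S f" "C2_on S g"
    and "\<And>y. y \<in> S \<Longrightarrow> f y - g y \<le> f x - g x"
  shows "laplacian f x \<le> laplacian g x"
  unfolding laplacian_def
  using second_partial_le_at_max_of_diff[OF assms(1,2) _ assms(3-5)] by (simp add: sum_mono)

lemma integrable_on_if_continuous_on_closure:
  fixes f :: "'a::euclidean_space \<Rightarrow> real"
  assumes "S \<in> sets lebesgue" "bounded S" "continuous_on (closure S) f"
  shows "f integrable_on S"
proof -
  have "compact (closure S)"
    using \<open>bounded S\<close> by (simp add: compact_closure)
  then obtain B where B: "\<And>x. x \<in> closure S \<Longrightarrow> norm (f x) \<le> B"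
    using compact_continuous_image[OF assms(3)] compact_imp_bounded bounded_iff by (metis imageI)
  have "S \<in> lmeasurable"
    using assms(1,2) by (simp add: bounded_set_imp_lmeasurable)
  moreover have "continuous_on S f"
    using assms(3) continuous_on_subset closure_subset by blast
  moreover have "\<And>x. x \<in> S \<Longrightarrow> norm (f x) \<le> B"
    using B closure_subset by blast
  ultimately have "f absolutely_integrable_on S"
    using continuous_imp_measurable_on_sets_lebesgue integrable_on_const
    by (intro measurable_bounded_by_integrable_imp_absolutely_integrable[where g = "\<lambda>_. B"]) auto
  then show ?thesis
    by (simp add: absolutely_integrable_on_def)
qed

text \<open>Positivity is seen on a small box inside \<open>S\<close>, where a continuous non-negative function with
  zero integral vanishes identically.\<close>

lemma integral_pos_if_continuous_pos:
  fixes f :: "'a::euclidean_space \<Rightarrow> real"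
  assumes "open S" "S \<noteq> {}" "f integrable_on S" "continuous_on S f"
    and pos: "\<And>x. x \<in> S \<Longrightarrow> 0 < f x"
  shows "0 < integral S f"
proof -
  obtain a b where box: "cbox a b \<subseteq> S" "\<forall>i\<in>Basis. a \<bullet> i < b \<bullet> i"
    using \<open>open S\<close> \<open>S \<noteq> {}\<close> open_contains_cbox by (metis ex_in_conv)
  have "box a b \<noteq> {}" "a \<in> cbox a b"
    using box(2) by (auto simp: box_ne_empty mem_box less_imp_le)
  have cont: "continuous_on (cbox a b) f"
    using \<open>continuous_on S f\<close> box(1) continuous_on_subset by blast
  have "0 < f a"
    using pos box(1) \<open>a \<in> cbox a b\<close> by blast
  then have "integral (cbox a b) f \<noteq> 0"
    using integral_cbox_eq_0_iff[OF cont \<open>box a b \<noteq> {}\<close>] pos box(1) \<open>a \<in> cbox a b\<close>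
    by (metis less_irrefl less_imp_le subsetD)
  moreover have "0 \<le> integral (cbox a b) f"
    using pos box(1) by (intro integral_nonneg integrable_continuous cont) (auto simp: less_imp_le)
  moreover have "integral (cbox a b) f \<le> integral S f"
    using pos by (intro integral_subset_le box(1) integrable_continuous cont assms(3)) (simp add: less_imp_le)
  ultimately show ?thesis
    by linarith
qed

lemma laplacian_of_solution:
  assumes "is_solution \<Omega> u U" "x \<in> \<Omega>"
  shows "laplacian U x = - exp (- u x - U x) / integral \<Omega> (\<lambda>y. exp (- u y - U y))"
proof -
  have reorder: "\<And>y. - (U y + u y) = - u y - U y"
    by simp
  have "- laplacian U x = exp (- (U x + u x)) / integral \<Omega> (\<lambda>y. exp (- (U y + u y)))"
    using assms unfolding is_solution_def by blast
  then show ?thesis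
    unfolding reorder by simp
qed

lemma solution_le_if_integral_ge:
  fixes \<Omega> :: "'a::euclidean_space set" and u U1 U2 :: "'a \<Rightarrow> real"
  assumes "open \<Omega>" "\<Omega> \<noteq> {}" "bounded \<Omega>" "continuous_on (closure \<Omega>) u"
    and sol1: "is_solution \<Omega> u U1" and sol2: "is_solution \<Omega> u U2"
    and integral_ge: "integral \<Omega> (\<lambda>x. exp (- u x - U1 x)) \<ge> integral \<Omega> (\<lambda>x. exp (- u x - U2 x))"
  shows "\<forall>x\<in>\<Omega>. U1 x \<le> U2 x"
proof (rule ccontr)
  assume "\<not> (\<forall>x\<in>\<Omega>. U1 x \<le> U2 x)"
  then obtain x1 where "x1 \<in> \<Omega>" "U2 x1 < U1 x1"
    by force
  have cont1: "continuous_on (closure \<Omega>) U1" and cont2: "continuous_on (closure \<Omega>) U2"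
    using sol1 sol2 by (auto simp: is_solution_def)
  obtain x0 where "x0 \<in> closure \<Omega>" and max: "\<And>y. y \<in> closure \<Omega> \<Longrightarrow> U1 y - U2 y \<le> U1 x0 - U2 x0"
    using continuous_attains_sup[of "closure \<Omega>" "\<lambda>x. U1 x - U2 x"] cont1 cont2 \<open>\<Omega> \<noteq> {}\<close> \<open>bounded \<Omega>\<close>
    by (auto simp: compact_closure intro: continuous_intros)
  have "U2 x0 < U1 x0"
    using max[of x1] \<open>x1 \<in> \<Omega>\<close> \<open>U2 x1 < U1 x1\<close> closure_subset by force
  then have "x0 \<notin> frontier \<Omega>"
    using sol1 sol2 by (auto simp: is_solution_def)
  then have "x0 \<in> \<Omega>"
    using \<open>x0 \<in> closure \<Omega>\<close> \<open>open \<Omega>\<close> by (simp add: frontier_def interior_open)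
  have "laplacian U1 x0 \<le> laplacian U2 x0"
    using sol1 sol2 max closure_subset \<open>x0 \<in> \<Omega>\<close>
    by (intro laplacian_le_at_max_of_diff[OF \<open>open \<Omega>\<close>]) (auto simp: is_solution_def)
  moreover have "laplacian U2 x0 < laplacian U1 x0"
  proof -
    define I1 where "I1 = integral \<Omega> (\<lambda>x. exp (- u x - U1 x))"
    define I2 where "I2 = integral \<Omega> (\<lambda>x. exp (- u x - U2 x))"
    have cont: "continuous_on (closure \<Omega>) (\<lambda>x. exp (- u x - U2 x))"
      using \<open>continuous_on (closure \<Omega>) u\<close> cont2 by (intro continuous_intros)
    have "0 < I2"
      unfolding I2_def using \<open>open \<Omega>\<close> \<open>bounded \<Omega>\<close> \<open>\<Omega> \<noteq> {}\<close> cont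
      by (intro integral_pos_if_continuous_pos integrable_on_if_continuous_on_closure)
        (auto intro: continuous_on_subset[OF _ closure_subset])
    have "exp (- u x0 - U1 x0) / I1 \<le> exp (- u x0 - U1 x0) / I2"
      using integral_ge \<open>0 < I2\<close> by (intro divide_left_mono) (auto simp: I1_def I2_def)
    also have "\<dots> < exp (- u x0 - U2 x0) / I2"
      using \<open>0 < I2\<close> \<open>U2 x0 < U1 x0\<close> by (simp add: divide_strict_right_mono)
    finally show ?thesis
      using laplacian_of_solution[OF sol1 \<open>x0 \<in> \<Omega>\<close>] laplacian_of_solution[OF sol2 \<open>x0 \<in> \<Omega>\<close>]
      by (simp add: I1_def I2_def)
  qed
  ultimately show False
    by simp
qed

theorem mainTheorem2:
  fixes \<Omega> :: "'a::euclidean_space set" and u U1 U2 :: "'a \<Rightarrow> real"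
  assumes "open \<Omega>" and "connected \<Omega>" and "\<Omega> \<noteq> {}"
    and "bounded \<Omega>" and "convex \<Omega>" and "smooth_boundary \<Omega>"
    and "continuous_on (closure \<Omega>) u"
    and "is_solution \<Omega> u U1" and "is_solution \<Omega> u U2"
  shows "(integral \<Omega> (\<lambda>x. exp (- u x - U1 x)) \<ge> integral \<Omega> (\<lambda>x. exp (- u x - U2 x))
            \<longrightarrow> (\<forall>x\<in>\<Omega>. U1 x \<le> U2 x))
       \<and> (integral \<Omega> (\<lambda>x. exp (- u x - U1 x)) = integral \<Omega> (\<lambda>x. exp (- u x - U2 x))
            \<longrightarrow> (\<forall>x\<in>\<Omega>. U1 x = U2 x))"
proof (intro conjI impI)
  show "\<forall>x\<in>\<Omega>. U1 x \<le> U2 x"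
    if "integral \<Omega> (\<lambda>x. exp (- u x - U1 x)) \<ge> integral \<Omega> (\<lambda>x. exp (- u x - U2 x))"
    using solution_le_if_integral_ge that assms by blast
next
  assume eq: "integral \<Omega> (\<lambda>x. exp (- u x - U1 x)) = integral \<Omega> (\<lambda>x. exp (- u x - U2 x))"
  have "\<forall>x\<in>\<Omega>. U1 x \<le> U2 x" "\<forall>x\<in>\<Omega>. U2 x \<le> U1 x"
    using solution_le_if_integral_ge[of \<Omega> u U1 U2] solution_le_if_integral_ge[of \<Omega> u U2 U1] eq assms
    by simp_all
  then show "\<forall>x\<in>\<Omega>. U1 x = U2 x"
    using order_antisym by blast
qed

end
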